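(* Let $\mathbb{F}$ be a finite field with $n=|\mathbb{F}|$, let $d<n$ and $\delta=1-d/n\ge 3/4$, and let $0<\rho\le\delta/8$. Let $f\colon\mathbb{F}^m\to\mathbb{F}$ and let $a,h,h'\in\mathbb{F}^m$ be such that the function $g\colon\mathbb{F}^2\to\mathbb{F}$, $g(t,s)=f(a+th+sh')$, has at least $(\delta-2\rho)n^2$ nonzero values. Choose $s,s',t,t'\in\mathbb{F}$ independently and uniformly and let $y=a+sh+s'h'$ and $u=th+t'h'$. Then \[ \Pr\big[\,|\{r\in\mathbb{F}: f(y+ru)\ne0\}|\ge 2\rho n\,\big]\ge 1-\frac{4}{n}. \] *)

theory Defs
  imports "HOL-Analysis.Analysis"
begin

end

theory Submission
  imports Defs
begin

text \<open>Identify the plane spanned by \<open>h, h'\<close> at \<open>a\<close> with \<open>F\<^sup>2\<close> and let \<open>S\<close> be the support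
of \<open>g\<close>. On a uniformly random line \<open>(s, s') + r (t, t')\<close> the points for distinct \<open>r\<close> are
uniform and pairwise independent, so the number \<open>X\<close> of them in \<open>S\<close> has mean \<open>|S|/n\<close> and
total squared deviation \<open>n |S| (n\<^sup>2 - |S|) \<le> n\<^sup>5/4\<close>, i.e. variance at most \<open>n/4\<close>. Since
\<open>|S|/n \<ge> (\<delta> - 2\<rho>) n \<ge> 2\<rho>n + 3n/8\<close>, Chebyshev bounds the probability of \<open>X < 2\<rho>n\<close> by
\<open>(n/4) / (3n/8)\<^sup>2 = 16/(9n)\<close>.\<close>

lemma card_dev_ge_mult_sq_le:
  fixes X :: "'w \<Rightarrow> real"
  assumes "finite \<Omega>" "0 \<le> \<epsilon>"
  shows "real (card {\<omega>\<in>\<Omega>. \<epsilon> \<le> \<bar>X \<omega> - \<mu>\<bar>}) * \<epsilon>\<^sup>2 \<le> (\<Sum>\<omega>\<in>\<Omega>. (X \<omega> - \<mu>)\<^sup>2)"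
proof -
  have "real (card {\<omega>\<in>\<Omega>. \<epsilon> \<le> \<bar>X \<omega> - \<mu>\<bar>}) * \<epsilon>\<^sup>2 \<le> (\<Sum>\<omega>\<in>{\<omega>\<in>\<Omega>. \<epsilon> \<le> \<bar>X \<omega> - \<mu>\<bar>}. (X \<omega> - \<mu>)\<^sup>2)"
  proof (rule sum_bounded_below)
    fix \<omega> assume "\<omega> \<in> {\<omega>\<in>\<Omega>. \<epsilon> \<le> \<bar>X \<omega> - \<mu>\<bar>}"
    then have "\<epsilon>\<^sup>2 \<le> \<bar>X \<omega> - \<mu>\<bar>\<^sup>2" using \<open>0 \<le> \<epsilon>\<close> by (intro power_mono) auto
    then show "\<epsilon>\<^sup>2 \<le> (X \<omega> - \<mu>)\<^sup>2" by simp
  qed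
  also have "\<dots> \<le> (\<Sum>\<omega>\<in>\<Omega>. (X \<omega> - \<mu>)\<^sup>2)"
    using \<open>finite \<Omega>\<close> by (intro sum_mono2) auto
  finally show ?thesis .
qed

lemma sum_sq_dev_pairwise_independent:
  fixes A :: "'r \<Rightarrow> 'w set" and R :: "'r set" and \<Omega> :: "'w set"
  assumes "finite R" "finite \<Omega>" "\<Omega> \<noteq> {}"
    and sub: "\<And>r. r \<in> R \<Longrightarrow> A r \<subseteq> \<Omega>"
    and card1: "\<And>r. r \<in> R \<Longrightarrow> card (A r) = k"
    and card2: "\<And>r r'. r \<in> R \<Longrightarrow> r' \<in> R \<Longrightarrow> r \<noteq> r' \<Longrightarrow> card (A r \<inter> A r') * card \<Omega> = k\<^sup>2"
  defines "N \<equiv> real (card R)" and "M \<equiv> real (card \<Omega>)"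
  shows "(\<Sum>\<omega>\<in>\<Omega>. (real (card {r\<in>R. \<omega> \<in> A r}) - N * k / M)\<^sup>2) = N * k * (M - k) / M"
proof -
  define X where "X \<omega> = (\<Sum>r\<in>R. of_bool (\<omega> \<in> A r) :: real)" for \<omega>
  have M_pos: "M > 0" using assms(2,3) by (simp add: M_def card_gt_0_iff)
  have X_eq: "real (card {r\<in>R. \<omega> \<in> A r}) = X \<omega>" for \<omega>
    using \<open>finite R\<close> by (simp add: X_def Collect_conj_eq Int_commute)
  have pair: "(\<Sum>\<omega>\<in>\<Omega>. of_bool (\<omega> \<in> A r) * of_bool (\<omega> \<in> A r') :: real)
      = (if r = r' then k else k\<^sup>2 / M)" if "r \<in> R" "r' \<in> R" for r r'
  proof -
    have "(\<Sum>\<omega>\<in>\<Omega>. of_bool (\<omega> \<in> A r) * of_bool (\<omega> \<in> A r') :: real) = card (A r \<inter> A r')"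
    proof -
      have "\<Omega> \<inter> {\<omega>. \<omega> \<in> A r \<and> \<omega> \<in> A r'} = A r \<inter> A r'" using sub[OF that(1)] by blast
      then show ?thesis using \<open>finite \<Omega>\<close> by (simp flip: of_bool_conj)
    qed
    then show ?thesis
      using card1[OF that(1)] card2[OF that] M_pos unfolding M_def
      by (auto simp: field_simps simp flip: of_nat_mult of_nat_power)
  qed
  have sum_X: "(\<Sum>\<omega>\<in>\<Omega>. X \<omega>) = N * k"
  proof -
    have "(\<Sum>\<omega>\<in>\<Omega>. X \<omega>) = (\<Sum>r\<in>R. \<Sum>\<omega>\<in>\<Omega>. of_bool (\<omega> \<in> A r) * of_bool (\<omega> \<in> A r))"
      unfolding X_def by (subst sum.swap) (intro sum.cong refl; simp)
    also have "\<dots> = N * k" using pair by (simp add: N_def)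
    finally show ?thesis .
  qed
  have sum_X2: "(\<Sum>\<omega>\<in>\<Omega>. (X \<omega>)\<^sup>2) = N * k + N * (N - 1) * k\<^sup>2 / M"
  proof -
    have "(\<Sum>\<omega>\<in>\<Omega>. (X \<omega>)\<^sup>2)
        = (\<Sum>\<omega>\<in>\<Omega>. \<Sum>r\<in>R. \<Sum>r'\<in>R. of_bool (\<omega> \<in> A r) * of_bool (\<omega> \<in> A r'))"
      unfolding X_def power2_eq_square sum_product ..
    also have "\<dots> = (\<Sum>r\<in>R. \<Sum>\<omega>\<in>\<Omega>. \<Sum>r'\<in>R. of_bool (\<omega> \<in> A r) * of_bool (\<omega> \<in> A r'))"
      by (rule sum.swap)
    also have "\<dots> = (\<Sum>r\<in>R. \<Sum>r'\<in>R. \<Sum>\<omega>\<in>\<Omega>. of_bool (\<omega> \<in> A r) * of_bool (\<omega> \<in> A r'))"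
      by (rule sum.cong[OF refl], rule sum.swap)
    also have "\<dots> = (\<Sum>r\<in>R. k + (N - 1) * k\<^sup>2 / M)"
    proof (rule sum.cong[OF refl])
      fix r assume "r \<in> R"
      have "(\<Sum>r'\<in>R. \<Sum>\<omega>\<in>\<Omega>. of_bool (\<omega> \<in> A r) * of_bool (\<omega> \<in> A r'))
          = (\<Sum>r'\<in>R. if r = r' then k else k\<^sup>2 / M)"
        using pair \<open>r \<in> R\<close> by simp
      also have "\<dots> = k + (N - 1) * k\<^sup>2 / M"
      proof -
        have "card R \<ge> 1" using \<open>finite R\<close> \<open>r \<in> R\<close> by (auto simp: Suc_le_eq card_gt_0_iff)
        then show ?thesis using \<open>finite R\<close> \<open>r \<in> R\<close>
          by (simp add: sum.If_cases N_def Collect_conj_eq Int_absorb1 card_Diff_singleton of_nat_diff flip: Diff_eq)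
      qed
      finally show "(\<Sum>r'\<in>R. \<Sum>\<omega>\<in>\<Omega>. of_bool (\<omega> \<in> A r) * of_bool (\<omega> \<in> A r')) = k + (N - 1) * k\<^sup>2 / M" .
    qed
    also have "\<dots> = N * k + N * (N - 1) * k\<^sup>2 / M" by (simp add: N_def algebra_simps)
    finally show ?thesis .
  qed
  define \<mu> where "\<mu> = N * k / M"
  have "(\<Sum>\<omega>\<in>\<Omega>. (X \<omega> - \<mu>)\<^sup>2) = (\<Sum>\<omega>\<in>\<Omega>. (X \<omega>)\<^sup>2) - 2 * \<mu> * (\<Sum>\<omega>\<in>\<Omega>. X \<omega>) + M * \<mu>\<^sup>2"
  proof -
    have "(\<Sum>\<omega>\<in>\<Omega>. (X \<omega> - \<mu>)\<^sup>2) = (\<Sum>\<omega>\<in>\<Omega>. (X \<omega>)\<^sup>2 - 2 * \<mu> * X \<omega> + \<mu>\<^sup>2)"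
      by (rule sum.cong) (simp_all add: power2_diff)
    then show ?thesis by (simp add: sum.distrib sum_subtractf M_def flip: sum_distrib_left)
  qed
  also have "\<dots> = N * k * (M - k) / M"
    unfolding sum_X sum_X2 \<mu>_def using M_pos by (simp add: field_simps power2_eq_square)
  finally show ?thesis by (simp add: X_eq \<mu>_def)
qed

lemma card_vimage_bij: "bij f \<Longrightarrow> card (f -` A) = card A"
  by (simp add: bij_def card_vimage_inj)

fun line_point :: "'a::field \<Rightarrow> 'a \<times> 'a \<times> 'a \<times> 'a \<Rightarrow> 'a \<times> 'a" where
  "line_point r (s, s', t, t') = (s + r * t, s' + r * t')"

lemma bij_line_point_direction: "bij (\<lambda>\<omega>. (line_point r \<omega>, snd (snd \<omega>)))"
  by (rule o_bij[where g = "\<lambda>((x, y), (t, t')). (x - r * t, y - r * t', t, t')"])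
     (auto simp: fun_eq_iff)

lemma bij_line_points:
  fixes r r' :: "'a::field"
  assumes "r \<noteq> r'"
  shows "bij (\<lambda>\<omega>. (line_point r \<omega>, line_point r' \<omega>))"
proof -
  have "r - r' \<noteq> 0" using assms by simp
  define slope where "slope x x' = (x - x') / (r - r')" for x x' :: 'a
  have slope_line: "slope (s + r * t) (s + r' * t) = t" for s t
  proof -
    have "(s + r * t) - (s + r' * t) = (r - r') * t" by (simp add: algebra_simps)
    then show ?thesis using \<open>r - r' \<noteq> 0\<close> by (simp add: slope_def)
  qed
  have line_slope: "x - r * slope x x' + r' * slope x x' = x'" for x x'
  proof -
    have "x - r * slope x x' + r' * slope x x' = x - (r - r') * slope x x'"
      by (simp add: algebra_simps)
    also have "\<dots> = x'" using \<open>r - r' \<noteq> 0\<close> by (simp add: slope_def)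
    finally show ?thesis .
  qed
  show ?thesis
  proof (rule o_bij[where g = "\<lambda>((x, y), (x', y')).
      (x - r * slope x x', y - r * slope y y', slope x x', slope y y')"])
    show "(\<lambda>((x, y), (x', y')). (x - r * slope x x', y - r * slope y y', slope x x', slope y y'))
        \<circ> (\<lambda>\<omega>. (line_point r \<omega>, line_point r' \<omega>)) = id"
      by (auto simp: fun_eq_iff slope_line)
    show "(\<lambda>\<omega>. (line_point r \<omega>, line_point r' \<omega>))
        \<circ> (\<lambda>((x, y), (x', y')). (x - r * slope x x', y - r * slope y y', slope x x', slope y y')) = id"
      by (auto simp: fun_eq_iff line_slope)
  qed
qed

lemma card_line_point_in:
  fixes S :: "('a::{finite,field} \<times> 'a) set"
  shows "card {\<omega>. line_point r \<omega> \<in> S} = card S * CARD('a)\<^sup>2"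
proof -
  have "{\<omega>. line_point r \<omega> \<in> S} = (\<lambda>\<omega>. (line_point r \<omega>, snd (snd \<omega>))) -` (S \<times> UNIV)"
    by auto
  then show ?thesis
    by (simp add: card_vimage_bij[OF bij_line_point_direction] card_cartesian_product power2_eq_square)
qed

lemma card_line_points_in:
  fixes S :: "('a::{finite,field} \<times> 'a) set"
  assumes "r \<noteq> r'"
  shows "card ({\<omega>. line_point r \<omega> \<in> S} \<inter> {\<omega>. line_point r' \<omega> \<in> S}) = (card S)\<^sup>2"
proof -
  have "{\<omega>. line_point r \<omega> \<in> S} \<inter> {\<omega>. line_point r' \<omega> \<in> S}
      = (\<lambda>\<omega>. (line_point r \<omega>, line_point r' \<omega>)) -` (S \<times> S)"
    by auto
  then show ?thesis
    by (simp add: card_vimage_bij[OF bij_line_points[OF assms]] card_cartesian_product power2_eq_square)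
qed

lemma sum_sq_dev_line_points:
  fixes S :: "('a::{finite,field} \<times> 'a) set"
  defines "N \<equiv> real CARD('a)"
  shows "(\<Sum>\<omega>\<in>UNIV. (real (card {r. line_point r \<omega> \<in> S}) - real (card S) / N)\<^sup>2)
    = N * real (card S) * (N\<^sup>2 - real (card S))"
proof -
  have N_pos: "N > 0" by (simp add: N_def)
  have card_quadruples: "card (UNIV :: ('a \<times> 'a \<times> 'a \<times> 'a) set) = CARD('a) ^ 4"
    by (simp add: power4_eq_xxxx)
  have "(\<Sum>\<omega>\<in>UNIV. (real (card {r. line_point r \<omega> \<in> S}) - N * (real (card S) * N\<^sup>2) / N ^ 4)\<^sup>2)
    = N * (real (card S) * N\<^sup>2) * (N ^ 4 - real (card S) * N\<^sup>2) / N ^ 4"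
    using sum_sq_dev_pairwise_independent[of UNIV UNIV "\<lambda>r. {\<omega>. line_point r \<omega> \<in> S}" "card S * CARD('a)\<^sup>2"]
    by (simp add: card_line_point_in card_line_points_in card_quadruples N_def power_mult_distrib
        power4_eq_xxxx mult.assoc flip: power_mult)
  moreover have "N * (real (card S) * N\<^sup>2) / N ^ 4 = real (card S) / N"
    using N_pos by (simp add: field_simps power2_eq_square power4_eq_xxxx)
  moreover have "N * (real (card S) * N\<^sup>2) * (N ^ 4 - real (card S) * N\<^sup>2) / N ^ 4
      = N * real (card S) * (N\<^sup>2 - real (card S))"
    using N_pos by (simp add: field_simps power2_eq_square power4_eq_xxxx)
  ultimately show ?thesis by simp
qed

lemma card_lines_below_mean_le:
  fixes S :: "('a::{finite,field} \<times> 'a) set"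
  defines "N \<equiv> real CARD('a)"
  assumes "0 \<le> \<epsilon>"
  shows "real (card {\<omega>. real (card {r. line_point r \<omega> \<in> S}) \<le> real (card S) / N - \<epsilon>}) * \<epsilon>\<^sup>2
    \<le> N ^ 5 / 4"
proof -
  let ?X = "\<lambda>\<omega>. real (card {r. line_point r \<omega> \<in> S})" and ?\<mu> = "real (card S) / N"
  have "{\<omega>. ?X \<omega> \<le> ?\<mu> - \<epsilon>} \<subseteq> {\<omega>\<in>UNIV. \<epsilon> \<le> \<bar>?X \<omega> - ?\<mu>\<bar>}" by auto
  then have "real (card {\<omega>. ?X \<omega> \<le> ?\<mu> - \<epsilon>}) * \<epsilon>\<^sup>2 \<le> real (card {\<omega>\<in>UNIV. \<epsilon> \<le> \<bar>?X \<omega> - ?\<mu>\<bar>}) * \<epsilon>\<^sup>2"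
    by (intro mult_right_mono of_nat_mono card_mono) auto
  also have "\<dots> \<le> (\<Sum>\<omega>\<in>UNIV. (?X \<omega> - ?\<mu>)\<^sup>2)"
    using \<open>0 \<le> \<epsilon>\<close> by (intro card_dev_ge_mult_sq_le) auto
  also have "\<dots> = N * (real (card S) * (N\<^sup>2 - real (card S)))"
    unfolding N_def sum_sq_dev_line_points by simp
  also have "\<dots> \<le> N * (N ^ 4 / 4)"
  proof (rule mult_left_mono)
    have "N ^ 4 / 4 - real (card S) * (N\<^sup>2 - real (card S)) = (N\<^sup>2 - 2 * real (card S))\<^sup>2 / 4"
      by (simp add: power2_eq_square power4_eq_xxxx algebra_simps)
    moreover have "(N\<^sup>2 - 2 * real (card S))\<^sup>2 / 4 \<ge> 0" by simp
    ultimately show "real (card S) * (N\<^sup>2 - real (card S)) \<le> N ^ 4 / 4" by linarith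
  qed (simp add: N_def)
  also have "\<dots> = N ^ 5 / 4" by (simp add: eval_nat_numeral)
  finally show ?thesis .
qed

lemma card_lines_below_le:
  fixes S :: "('a::{finite,field} \<times> 'a) set"
  defines "N \<equiv> real CARD('a)"
  assumes "\<theta> + 3/8 * N \<le> real (card S) / N"
  shows "real (card {\<omega>. real (card {r. line_point r \<omega> \<in> S}) < \<theta>}) \<le> 16/9 * N ^ 3"
proof -
  have N_pos: "N > 0" by (simp add: N_def)
  have "{\<omega>. real (card {r. line_point r \<omega> \<in> S}) < \<theta>}
      \<subseteq> {\<omega>. real (card {r. line_point r \<omega> \<in> S}) \<le> real (card S) / N - 3/8 * N}"
    using assms(2) by auto
  then have "real (card {\<omega>. real (card {r. line_point r \<omega> \<in> S}) < \<theta>}) * (3/8 * N)\<^sup>2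
      \<le> real (card {\<omega>. real (card {r. line_point r \<omega> \<in> S}) \<le> real (card S) / N - 3/8 * N}) * (3/8 * N)\<^sup>2"
    by (intro mult_right_mono of_nat_mono card_mono) auto
  also have "\<dots> \<le> N ^ 5 / 4"
    unfolding N_def using N_pos by (intro card_lines_below_mean_le) (simp add: N_def)
  also have "\<dots> = (16/9 * N ^ 3) * (3/8 * N)\<^sup>2"
    by (simp add: power2_eq_square eval_nat_numeral)
  finally show ?thesis
    by (rule mult_right_le_imp_le) (use N_pos in simp)
qed

lemma card_lines_at_least_ge:
  fixes S :: "('a::{finite,field} \<times> 'a) set"
  defines "N \<equiv> real CARD('a)"
  assumes "\<theta> + 3/8 * N \<le> real (card S) / N"
  shows "1 - 16 / (9 * N) \<le> real (card {\<omega>. \<theta> \<le> real (card {r. line_point r \<omega> \<in> S})}) / N ^ 4"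
proof -
  let ?B = "{\<omega>. real (card {r. line_point r \<omega> \<in> S}) < \<theta>}"
  have N_pos: "N > 0" by (simp add: N_def)
  have card_quadruples: "card (UNIV :: ('a \<times> 'a \<times> 'a \<times> 'a) set) = CARD('a) ^ 4"
    by (simp add: power4_eq_xxxx)
  have "card ?B \<le> CARD('a) ^ 4" using card_quadruples by (metis card_mono finite subset_UNIV)
  moreover have "card (UNIV - ?B) = CARD('a) ^ 4 - card ?B"
    by (simp only: card_Diff_subset finite subset_UNIV card_quadruples)
  moreover have "{\<omega>. \<theta> \<le> real (card {r. line_point r \<omega> \<in> S})} = UNIV - ?B" by auto
  ultimately have "real (card {\<omega>. \<theta> \<le> real (card {r. line_point r \<omega> \<in> S})}) = N ^ 4 - real (card ?B)"
    by (simp add: of_nat_diff N_def)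
  moreover have "real (card ?B) \<le> 16/9 * N ^ 3"
    using assms(2) unfolding N_def by (rule card_lines_below_le)
  moreover have "(1 - 16 / (9 * N)) * N ^ 4 = N ^ 4 - 16/9 * N ^ 3"
    using N_pos by (simp add: field_simps power3_eq_cube power4_eq_xxxx)
  ultimately show ?thesis
    using N_pos by (simp add: pos_le_divide_eq)
qed

lemma line_through_plane_point:
  fixes a h h' :: "'a::field ^ 'm"
  shows "(a + s *s h + s' *s h') + r *s (t *s h + t' *s h')
    = a + (s + r * t) *s h + (s' + r * t') *s h'"
  by (simp add: vec_eq_iff algebra_simps)

theorem mainTheorem5:
  fixes f :: "'a::{finite,field} ^ 'm \<Rightarrow> 'a"
    and a h h' :: "'a ^ 'm"
    and d :: nat and \<delta> \<rho> :: real
  defines "n \<equiv> CARD('a)"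
  assumes "d < n"
    and "\<delta> = 1 - real d / real n"
    and "\<delta> \<ge> 3/4"
    and "0 < \<rho>" and "\<rho> \<le> \<delta> / 8"
    and "real (card {(t, s). f (a + t *s h + s *s h') \<noteq> 0}) \<ge> (\<delta> - 2*\<rho>) * (real n)^2"
  shows "real (card {(s :: 'a, s', t, t').
            real (card {r. f ((a + s *s h + s' *s h') + r *s (t *s h + t' *s h')) \<noteq> 0})
              \<ge> 2 * \<rho> * real n}) / (real n)^4
         \<ge> 1 - 4 / real n"
proof -
  define S where "S = {(t, s). f (a + t *s h + s *s h') \<noteq> 0}"
  have n_pos: "real n > 0" by (simp add: n_def)
  have "{r. f ((a + s *s h + s' *s h') + r *s (t *s h + t' *s h')) \<noteq> 0}
      = {r. line_point r (s, s', t, t') \<in> S}" for s s' t t'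
    unfolding line_through_plane_point by (simp add: S_def)
  then have good_lines: "{(s :: 'a, s', t, t').
      real (card {r. f ((a + s *s h + s' *s h') + r *s (t *s h + t' *s h')) \<noteq> 0}) \<ge> 2 * \<rho> * real n}
      = {\<omega>. 2 * \<rho> * real n \<le> real (card {r. line_point r \<omega> \<in> S})}"
    by auto
  have "(2 * \<rho> + 3/8) * real n \<le> (\<delta> - 2 * \<rho>) * real n"
    using assms(4,6) n_pos by (intro mult_right_mono) auto
  also have "\<dots> \<le> real (card S) / real n"
    using assms(7) n_pos by (simp add: S_def pos_le_divide_eq power2_eq_square mult.assoc)
  finally have "1 - 16 / (9 * real n) \<le> real (card {\<omega>. 2 * \<rho> * real n \<le> real (card {r. line_point r \<omega> \<in> S})}) / real n ^ 4"
    unfolding n_def by (intro card_lines_at_least_ge) (simp add: distrib_right)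
  moreover have "1 - 4 / real n \<le> 1 - 16 / (9 * real n)"
    using n_pos by (simp add: field_simps)
  ultimately show ?thesis
    unfolding good_lines by linarith
qed

end
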